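(* Let $r\ge 3$ and $n\ge\frac{(r-1)(2r+1)}{2}$, and let $\mathcal{H}$ be an $n$-vertex $\mathrm{T}_r$-free $r$-graph with at least one edge and with $\delta_{r-1}^{+}(\mathcal{H})>\frac{2n}{2r+1}$. Then there exist $r$ pairwise disjoint sets $V_1,\ldots,V_r\subseteq V(\mathcal{H})$, each independent in $\mathcal{H}$, such that $\min\{|V_1|,\ldots,|V_r|\}>\frac{2n}{2r+1}$.
   Context: An $r$-graph $\mathcal{H}$ is a collection of $r$-subsets (edges) of a finite vertex set $V(\mathcal{H})$. The shadow is $\partial\mathcal{H}=\{e\in\binom{V(\mathcal{H})}{r-1}\colon e\subseteq E \text{ for some } E\in\mathcal{H}\}$. For $e\in\partial\mathcal{H}$, $N_{\mathcal{H}}(e)=\{v\in V(\mathcal{H})\colon e\cup\{v\}\in\mathcal{H}\}$. The minimum positive codegree is $\delta_{r-1}^{+}(\mathcal{H})=\min\{|N_{\mathcal{H}}(e)|\colon e\in\partial\mathcal{H}\}$. A set $I\subseteq V(\mathcal{H})$ is independent in $\mathcal{H}$ if every edge contains at most one vertex of $I$. The $r$-uniform generalized triangle is $\mathrm{T}_r=\{\{1,\ldots,r-1,r\},\{1,\ldots,r-1,r+1\},\{r,r+1,\ldots,2r-1\}\}$; $\mathcal{H}$ is $\mathrm{T}_r$-free if it contains no subhypergraph isomorphic to $\mathrm{T}_r$. *)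

theory Defs
  imports Complex_Main
begin

definition r_graph :: "nat \<Rightarrow> 'a set \<Rightarrow> 'a set set \<Rightarrow> bool" where
  "r_graph r V H \<longleftrightarrow> finite V \<and> (\<forall>E\<in>H. E \<subseteq> V \<and> card E = r)"

definition shadow :: "nat \<Rightarrow> 'a set \<Rightarrow> 'a set set \<Rightarrow> 'a set set" where
  "shadow r V H = {e. e \<subseteq> V \<and> card e = r - 1 \<and> (\<exists>E\<in>H. e \<subseteq> E)}"

definition nbhd :: "'a set \<Rightarrow> 'a set set \<Rightarrow> 'a set \<Rightarrow> 'a set" where
  "nbhd V H e = {v \<in> V. insert v e \<in> H}"

definition min_pos_codegree :: "nat \<Rightarrow> 'a set \<Rightarrow> 'a set set \<Rightarrow> nat" where
  "min_pos_codegree r V H = Min ((\<lambda>e. card (nbhd V H e)) ` shadow r V H)"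

definition independent :: "'a set set \<Rightarrow> 'a set \<Rightarrow> bool" where
  "independent H I \<longleftrightarrow> (\<forall>E\<in>H. card (E \<inter> I) \<le> 1)"

definition gen_triangle :: "nat \<Rightarrow> nat set set" where
  "gen_triangle r = {{1..r}, insert (r+1) {1..r-1}, {r..2*r-1}}"

definition T_free :: "nat \<Rightarrow> 'a set \<Rightarrow> 'a set set \<Rightarrow> bool" where
  "T_free r V H \<longleftrightarrow> \<not> (\<exists>f. inj_on f {1..2*r-1} \<and> f ` {1..2*r-1} \<subseteq> V \<and>
                         (\<forall>T\<in>gen_triangle r. f ` T \<in> H))"

end

theory Submission
  imports Defs
begin

text \<open>The bound on n makes every positive codegree at least r. For e in the shadow, the
neighbourhood N(e) is independent: if an edge F contained two vertices u, w of N(e), exchange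
the vertices of F \<inter> e one at a time for a neighbour of the remaining (r-1)-set lying outside e
(one exists because that codegree is at least r > |e|), keeping u and w, until F misses e;
then e \<union> {u}, e \<union> {w} and F form a copy of T_r. For an edge E the sets N(E - {v}), v \<in> E,
are pairwise disjoint: a common vertex x of N(E - {a}) and N(E - {b}) makes
(E - {b}) \<union> {x} an edge containing the two vertices x and a of N(E - {a}).\<close>

lemma not_T_free_if_triangle:
  assumes r: "r \<ge> 2"
    and A: "finite A" "card A = r - 1" "A \<subseteq> V"
    and C: "finite C" "card C = r" "C \<subseteq> V" "C \<inter> A = {}"
    and ab: "a \<in> C" "b \<in> C" "a \<noteq> b"
    and edges: "insert a A \<in> H" "insert b A \<in> H" "C \<in> H"
  shows "\<not> T_free r V H"
proof -
  define D where "D = C - {a, b}"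
  have D: "finite D" "card D = r - 2" "a \<notin> D" "b \<notin> D" "A \<inter> D = {}"
    using C ab by (auto simp: D_def card_Diff_subset)
  have "card {1..<r} = card A" "card {r+2..2*r-1} = card D"
    using A D r by auto
  then obtain h1 h2 where h1: "bij_betw h1 {1..<r} A" and h2: "bij_betw h2 {r+2..2*r-1} D"
    using A D by (metis finite_atLeastLessThan finite_atLeastAtMost finite_same_card_bij)
  define f where
    "f i = (if i < r then h1 i else if i = r then a else if i = r + 1 then b else h2 i)" for i
  have "f ` {1..<r} = h1 ` {1..<r}" "f ` {r+2..2*r-1} = h2 ` {r+2..2*r-1}"
    by (auto simp: f_def intro!: image_cong)
  then have low: "f ` {1..<r} = A" and high: "f ` {r+2..2*r-1} = D"
    using h1 h2 by (simp_all add: bij_betw_def)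
  have f_ab: "f r = a" "f (r + 1) = b"
    by (simp_all add: f_def)
  have all: "{1..2*r-1} = insert r (insert (r+1) ({1..<r} \<union> {r+2..2*r-1}))"
    using r by auto
  have C_eq: "C = insert a (insert b D)"
    using ab by (auto simp: D_def)
  have img: "f ` {1..2*r-1} = insert a (insert b (A \<union> D))"
    using all low high f_ab by auto
  have "card (insert a (insert b (A \<union> D))) = 2*r - 1"
  proof -
    have "a \<notin> A" "b \<notin> A"
      using ab C by auto
    then show ?thesis
      using A D ab r by (simp add: card_Un_disjoint)
  qed
  then have inj: "inj_on f {1..2*r-1}"
    using img by (simp add: inj_on_iff_eq_card)
  have into_V: "f ` {1..2*r-1} \<subseteq> V"
    using img A C C_eq by auto
  have "f ` {1..r} = insert a A" "f ` insert (r+1) {1..r-1} = insert b A"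
      "f ` {r..2*r-1} = C"
  proof -
    have intervals: "{1..r} = insert r {1..<r}" "{1..r-1} = {1..<r}"
        "{r..2*r-1} = insert r (insert (r+1) {r+2..2*r-1})"
      using r by auto
    show "f ` {1..r} = insert a A" "f ` insert (r+1) {1..r-1} = insert b A"
        "f ` {r..2*r-1} = C"
      unfolding intervals image_insert low high f_ab C_eq by (rule refl)+
  qed
  then have "\<forall>T\<in>gen_triangle r. f ` T \<in> H"
    using edges by (simp add: gen_triangle_def)
  then show ?thesis
    using inj into_V
    unfolding T_free_def by blast
qed

lemma edge_minus_in_shadow:
  assumes "r_graph r V H" "E \<in> H" "x \<in> E"
  shows "E - {x} \<in> shadow r V H"
  using assms by (auto simp: r_graph_def shadow_def card_Diff_singleton)

lemma nbhd_disjoint_shadow_set: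
  assumes "r_graph r V H" "e \<in> shadow r V H" "r \<ge> 1"
  shows "nbhd V H e \<inter> e = {}"
proof (rule ccontr)
  assume "nbhd V H e \<inter> e \<noteq> {}"
  then have "e \<in> H"
    by (auto simp: nbhd_def insert_absorb)
  then show False
    using assms by (auto simp: r_graph_def shadow_def)
qed

lemma min_pos_codegree_le_card_nbhd:
  assumes "finite V" "e \<in> shadow r V H"
  shows "min_pos_codegree r V H \<le> card (nbhd V H e)"
proof -
  have "finite (shadow r V H)"
    using assms(1) by (rule finite_subset[rotated, OF finite_Pow_iff[THEN iffD2]])
      (auto simp: shadow_def)
  then show ?thesis
    unfolding min_pos_codegree_def using assms(2) by simp
qed

lemma no_edge_through_two_nbhd_vertices:
  assumes r: "r \<ge> 2" and G: "r_graph r V H" and T: "T_free r V H"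
    and codeg: "\<And>g. g \<in> shadow r V H \<Longrightarrow> r \<le> card (nbhd V H g)"
    and e: "e \<in> shadow r V H"
    and uw: "u \<in> nbhd V H e" "w \<in> nbhd V H e" "u \<noteq> w"
    and F: "F \<in> H" "u \<in> F" "w \<in> F"
  shows False
  using F
proof (induction "card (F \<inter> e)" arbitrary: F)
  case 0
  have "finite e" "card e = r - 1" "e \<subseteq> V"
    using e G finite_subset by (auto simp: shadow_def r_graph_def)
  moreover have "finite F" "card F = r" "F \<subseteq> V"
    using "0.prems"(1) G finite_subset by (auto simp: r_graph_def)
  moreover have "F \<inter> e = {}"
    using "0.hyps" \<open>finite F\<close> by simp
  moreover have "insert u e \<in> H" "insert w e \<in> H"
    using uw by (auto simp: nbhd_def)
  ultimately have "\<not> T_free r V H"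
    using not_T_free_if_triangle[OF r, of e V F u w H] "0.prems" uw(3) by auto
  then show False
    using T by contradiction
next
  case (Suc k)
  have "finite F"
    using Suc.prems(1) G finite_subset by (auto simp: r_graph_def)
  obtain s where s: "s \<in> F \<inter> e"
    using Suc.hyps(2) by (metis card.empty all_not_in_conv nat.distinct(1))
  have g: "F - {s} \<in> shadow r V H"
    using edge_minus_in_shadow[OF G Suc.prems(1)] s by auto
  have "\<not> nbhd V H (F - {s}) \<subseteq> e"
  proof
    assume "nbhd V H (F - {s}) \<subseteq> e"
    then have "card (nbhd V H (F - {s})) \<le> r - 1"
      using e G card_mono[of e] finite_subset by (fastforce simp: shadow_def r_graph_def)
    then show False
      using codeg[OF g] r by simp
  qed
  then obtain y where y: "insert y (F - {s}) \<in> H" "y \<notin> e"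
    by (auto simp: nbhd_def)
  have "u \<notin> e" "w \<notin> e"
    using nbhd_disjoint_shadow_set[OF G e] uw(1,2) r by auto
  then have "u \<in> insert y (F - {s})" "w \<in> insert y (F - {s})"
    using s Suc.prems by auto
  moreover have "insert y (F - {s}) \<inter> e = F \<inter> e - {s}"
    using y(2) s by auto
  then have "k = card (insert y (F - {s}) \<inter> e)"
    using Suc.hyps(2) s \<open>finite F\<close> by simp
  ultimately show False
    using Suc.hyps(1) y(1) by blast
qed

lemma independent_nbhd:
  assumes "r \<ge> 2" "r_graph r V H" "T_free r V H"
    and "\<And>g. g \<in> shadow r V H \<Longrightarrow> r \<le> card (nbhd V H g)"
    and "e \<in> shadow r V H"
  shows "independent H (nbhd V H e)"
  unfolding independent_def
proof
  fix F assume F: "F \<in> H"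
  show "card (F \<inter> nbhd V H e) \<le> 1"
  proof (rule ccontr)
    assume "\<not> ?thesis"
    then obtain u w where "u \<in> F \<inter> nbhd V H e" "w \<in> F \<inter> nbhd V H e" "u \<noteq> w"
      using card_le_Suc0_iff_eq[of "F \<inter> nbhd V H e"] by (force simp: card_eq_0_iff)
    then show False
      using no_edge_through_two_nbhd_vertices[OF assms] F by blast
  qed
qed

lemma nbhd_edge_minus_disjoint:
  assumes G: "r_graph r V H" and E: "E \<in> H" "a \<in> E" "b \<in> E" "a \<noteq> b"
    and indep: "independent H (nbhd V H (E - {a}))"
  shows "nbhd V H (E - {a}) \<inter> nbhd V H (E - {b}) = {}"
proof (rule ccontr)
  assume "\<not> ?thesis"
  then obtain x where x: "x \<in> nbhd V H (E - {a})" "insert x (E - {b}) \<in> H"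
    by (auto simp: nbhd_def)
  have a_nbhd: "a \<in> nbhd V H (E - {a})"
    using G E by (auto simp: nbhd_def r_graph_def insert_absorb)
  have "finite E" "card E = r"
    using G E(1) finite_subset by (auto simp: r_graph_def)
  have "x \<noteq> a"
  proof
    assume "x = a"
    then have "E - {b} \<in> H"
      using x(2) E by (simp add: insert_absorb)
    then have "card (E - {b}) = r"
      using G by (simp add: r_graph_def)
    then show False
      using \<open>finite E\<close> \<open>card E = r\<close> E(3) card_Diff1_less by fastforce
  qed
  then have "card {x, a} \<le> card (insert x (E - {b}) \<inter> nbhd V H (E - {a}))"
    using x a_nbhd E \<open>finite E\<close> by (intro card_mono) auto
  then have "\<not> card (insert x (E - {b}) \<inter> nbhd V H (E - {a})) \<le> 1"
    using \<open>x \<noteq> a\<close> by simp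
  then show False
    using indep x(2) by (auto simp: independent_def)
qed

lemma threshold_ge_r_minus_one:
  assumes "r \<ge> 1" "real n \<ge> real ((r - 1) * (2 * r + 1)) / 2"
  shows "real r - 1 \<le> 2 * real n / (2 * real r + 1)"
proof -
  have "real ((r - 1) * (2 * r + 1)) = (real r - 1) * (2 * real r + 1)"
    using assms(1) by (simp only: of_nat_mult of_nat_diff[of 1 r] of_nat_add) simp
  then have "(real r - 1) * (2 * real r + 1) \<le> 2 * real n"
    using assms(2) by simp
  then show ?thesis
    by (simp add: pos_le_divide_eq)
qed

theorem claim2p3:
  fixes r n :: nat and V :: "'a set" and H :: "'a set set"
  assumes "r \<ge> 3"
    and "real n \<ge> real ((r - 1) * (2 * r + 1)) / 2"
    and "r_graph r V H" and "card V = n"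
    and "T_free r V H"
    and "H \<noteq> {}"
    and "real (min_pos_codegree r V H) > 2 * real n / (2 * real r + 1)"
  shows "\<exists>Vs :: nat \<Rightarrow> 'a set.
           (\<forall>i<r. Vs i \<subseteq> V \<and> independent H (Vs i)
                  \<and> real (card (Vs i)) > 2 * real n / (2 * real r + 1))
         \<and> (\<forall>i<r. \<forall>j<r. i \<noteq> j \<longrightarrow> Vs i \<inter> Vs j = {})"
proof -
  have large: "real (card (nbhd V H g)) > 2 * real n / (2 * real r + 1)"
    if "g \<in> shadow r V H" for g
    using min_pos_codegree_le_card_nbhd[of V g r H] that assms(3,7)
    by (simp add: r_graph_def)
  have "r \<le> card (nbhd V H g)" if "g \<in> shadow r V H" for g
    using large[OF that] threshold_ge_r_minus_one[OF _ assms(2)] assms(1) by fastforce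
  then have indep: "independent H (nbhd V H g)" if "g \<in> shadow r V H" for g
    using independent_nbhd[of r V H g] assms(1,3,5) that by simp
  obtain E where E: "E \<in> H" "finite E" "card E = r"
    using assms(3,6) finite_subset by (fastforce simp: r_graph_def)
  then obtain v where v: "bij_betw v {..<r} E"
    by (metis finite_same_card_bij finite_lessThan card_lessThan)
  then have vE: "v i \<in> E" and v_inj: "v i = v j \<longleftrightarrow> i = j" if "i < r" "j < r" for i j
    using that by (auto simp: bij_betw_def inj_on_def)
  show ?thesis
  proof (intro exI[of _ "\<lambda>i. nbhd V H (E - {v i})"] conjI allI impI)
    fix i assume "i < r"
    then have sh: "E - {v i} \<in> shadow r V H"
      using edge_minus_in_shadow[OF assms(3) E(1) vE] by simp
    show "nbhd V H (E - {v i}) \<subseteq> V" "independent H (nbhd V H (E - {v i}))"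
        "real (card (nbhd V H (E - {v i}))) > 2 * real n / (2 * real r + 1)"
      using indep[OF sh] large[OF sh] by (auto simp: nbhd_def)
  next
    fix i j assume "i < r" "j < r" "i \<noteq> j"
    then show "nbhd V H (E - {v i}) \<inter> nbhd V H (E - {v j}) = {}"
      using nbhd_edge_minus_disjoint[OF assms(3) E(1) vE vE] v_inj
        indep[OF edge_minus_in_shadow[OF assms(3) E(1) vE]] by blast
  qed
qed

end
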